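(* Let $(\mathcal{C},\Sigma,\mathscr{N})$ be an $n$-angulated category. Let $A_1\xrightarrow{\alpha_1}A_2\xrightarrow{\alpha_2}\cdots\xrightarrow{\alpha_{n-1}}A_n\xrightarrow{\alpha_n}\Sigma A_1$ and $A_1\xrightarrow{\beta_1}B_2\xrightarrow{\beta_2}B_3\to\cdots\xrightarrow{\beta_{n-1}}B_n\xrightarrow{\beta_n}\Sigma A_1$ be $n$-angles and $\varphi_2\colon A_2\to B_2$ a morphism with $\varphi_2\alpha_1=\beta_1$. Suppose $\varphi_3,\dots,\varphi_n$ are morphisms $\varphi_i\colon A_i\to B_i$ such that $(1_{A_1},\varphi_2,\dots,\varphi_n)$ is a morphism of $n$-$\Sigma$-sequences whose mapping cone is an $n$-angle (such $\varphi_i$ exist by (N4)). Then the $n$-$\Sigma$-sequence $$A_2\xrightarrow{\left[\begin{smallmatrix}-\alpha_2\\ \varphi_2\end{smallmatrix}\right]}A_3\oplus B_2\xrightarrow{\left[\begin{smallmatrix}\alpha_3&0\\ \varphi_3&\beta_2\end{smallmatrix}\right]}A_4\oplus B_3\xrightarrow{\left[\begin{smallmatrix}\alpha_4&0\\ -\varphi_4&\beta_3\end{smallmatrix}\right]}\cdots\xrightarrow{\left[\begin{smallmatrix}\alpha_{n-1}&0\\ (-1)^n\varphi_{n-1}&\beta_{n-2}\end{smallmatrix}\right]}A_n\oplus B_{n-1}\xrightarrow{\left[\begin{smallmatrix}(-1)^{n+1}\varphi_n&\beta_{n-1}\end{smallmatrix}\right]}B_n\xrightarrow{\Sigma\alpha_1\circ\beta_n}\Sigma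 A_2,$$ in which for $3\le k\le n-1$ the map $A_k\oplus B_{k-1}\to A_{k+1}\oplus B_k$ is $\left[\begin{smallmatrix}\alpha_k&0\\ (-1)^{k+1}\varphi_k&\beta_{k-1}\end{smallmatrix}\right]$, is an $n$-angle.
   Context: $\mathcal{C}$ is an additive category, $\Sigma$ an automorphism of $\mathcal{C}$, $n\ge3$. An $n$-$\Sigma$-sequence is a diagram $A_1\xrightarrow{\alpha_1}A_2\to\cdots\xrightarrow{\alpha_{n-1}}A_n\xrightarrow{\alpha_n}\Sigma A_1$; its left rotation is $A_2\xrightarrow{\alpha_2}\cdots\xrightarrow{\alpha_n}\Sigma A_1\xrightarrow{(-1)^n\Sigma\alpha_1}\Sigma A_2$. A morphism $(\varphi_1,\dots,\varphi_n)\colon A_\bullet\to B_\bullet$ consists of $\varphi_i\colon A_i\to B_i$ with $\varphi_{i+1}\alpha_i=\beta_i\varphi_i$ ($1\le i\le n-1$) and $\Sigma\varphi_1\alpha_n=\beta_n\varphi_n$; isomorphisms have all $\varphi_i$ invertible. Direct sums are termwise; $A_\bullet$ is a direct summand of $B_\bullet$ if there are morphisms $\varphi\colon A_\bullet\to B_\bullet$, $\psi\colon B_\bullet\to A_\bullet$ with $\psi_i\varphi_i=1$. The mapping cone of a morphism $(\varphi_1,\dots,\varphi_n)\colon A_\bullet\to B_\bullet$ is the $n$-$\Sigma$-sequence $A_2\oplus B_1\xrightarrow{\left[\begin{smallmatrix}-\alpha_2&0\\ \varphi_2&\beta_1\end{smallmatrix}\right]}A_3\oplus B_2\xrightarrow{\left[\begin{smallmatrix}-\alpha_3&0\\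 \varphi_3&\beta_2\end{smallmatrix}\right]}\cdots\xrightarrow{\left[\begin{smallmatrix}-\alpha_n&0\\ \varphi_n&\beta_{n-1}\end{smallmatrix}\right]}\Sigma A_1\oplus B_n\xrightarrow{\left[\begin{smallmatrix}-\Sigma\alpha_1&0\\ \Sigma\varphi_1&\beta_n\end{smallmatrix}\right]}\Sigma A_2\oplus\Sigma B_1$. An $n$-angulated category is a triple $(\mathcal{C},\Sigma,\mathscr{N})$ where $\mathscr{N}$ is a collection of $n$-$\Sigma$-sequences (called $n$-angles) satisfying: (N1)(a) $\mathscr{N}$ is closed under direct sums, direct summands and isomorphisms; (b) $A\xrightarrow{1}A\to0\to\cdots\to0\to\Sigma A$ is in $\mathscr{N}$ for every $A$; (c) every morphism $A_1\to A_2$ is the first morphism of some sequence in $\mathscr{N}$. (N2) a sequence is in $\mathscr{N}$ iff its left rotation is. (N3) given $A_\bullet,B_\bullet\in\mathscr{N}$ and $\varphi_1,\varphi_2$ with $\varphi_2\alpha_1=\beta_1\varphi_1$, there exist $\varphi_3,\dots,\varphi_n$ making $(\varphi_1,\dots,\varphi_n)$ a morphism. (N4) in the situation of (N3), $\varphi_3,\dots,\varphi_n$ can be chosen so that the mapping cone is in $\mathscr{N}$. *)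

theory Defs
  imports Main
begin

text \<open>Data of an additive category (with chosen zero object and chosen binary
biproducts) together with an automorphism \<Sigma> (c_shO on objects, c_shM on morphisms).
c_cmp g f denotes the composite g \<circ> f.\<close>

record ('o,'m) acat =
  c_ob   :: "'o set"
  c_mor  :: "'m set"
  c_dom  :: "'m \<Rightarrow> 'o"
  c_cod  :: "'m \<Rightarrow> 'o"
  c_cmp  :: "'m \<Rightarrow> 'm \<Rightarrow> 'm"
  c_id   :: "'o \<Rightarrow> 'm"
  c_add  :: "'m \<Rightarrow> 'm \<Rightarrow> 'm"
  c_neg  :: "'m \<Rightarrow> 'm"
  c_zer  :: "'o \<Rightarrow> 'o \<Rightarrow> 'm"
  c_zobj :: "'o"
  c_dsum :: "'o \<Rightarrow> 'o \<Rightarrow> 'o"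
  c_in1  :: "'o \<Rightarrow> 'o \<Rightarrow> 'm"
  c_in2  :: "'o \<Rightarrow> 'o \<Rightarrow> 'm"
  c_pr1  :: "'o \<Rightarrow> 'o \<Rightarrow> 'm"
  c_pr2  :: "'o \<Rightarrow> 'o \<Rightarrow> 'm"
  c_shO  :: "'o \<Rightarrow> 'o"
  c_shM  :: "'m \<Rightarrow> 'm"

definition hom :: "('o,'m) acat \<Rightarrow> 'o \<Rightarrow> 'o \<Rightarrow> 'm set" where
  "hom C X Y = {f \<in> c_mor C. c_dom C f = X \<and> c_cod C f = Y}"

definition is_category :: "('o,'m) acat \<Rightarrow> bool" where
  "is_category C \<longleftrightarrow>
     (\<forall>f \<in> c_mor C. c_dom C f \<in> c_ob C \<and> c_cod C f \<in> c_ob C) \<and>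
     (\<forall>X \<in> c_ob C. c_id C X \<in> hom C X X) \<and>
     (\<forall>f \<in> c_mor C. \<forall>g \<in> c_mor C. c_cod C f = c_dom C g \<longrightarrow>
         c_cmp C g f \<in> hom C (c_dom C f) (c_cod C g)) \<and>
     (\<forall>f \<in> c_mor C. \<forall>g \<in> c_mor C. \<forall>h \<in> c_mor C.
         c_cod C f = c_dom C g \<longrightarrow> c_cod C g = c_dom C h \<longrightarrow>
         c_cmp C h (c_cmp C g f) = c_cmp C (c_cmp C h g) f) \<and>
     (\<forall>f \<in> c_mor C. c_cmp C f (c_id C (c_dom C f)) = f \<and> c_cmp C (c_id C (c_cod C f)) f = f)"

definition is_preadditive :: "('o,'m) acat \<Rightarrow> bool" where
  "is_preadditive C \<longleftrightarrow> is_category C \<and>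
     (\<forall>X \<in> c_ob C. \<forall>Y \<in> c_ob C.
        c_zer C X Y \<in> hom C X Y \<and>
        (\<forall>f \<in> hom C X Y. \<forall>g \<in> hom C X Y. c_add C f g \<in> hom C X Y) \<and>
        (\<forall>f \<in> hom C X Y. c_neg C f \<in> hom C X Y) \<and>
        (\<forall>f \<in> hom C X Y. \<forall>g \<in> hom C X Y. \<forall>h \<in> hom C X Y.
            c_add C (c_add C f g) h = c_add C f (c_add C g h)) \<and>
        (\<forall>f \<in> hom C X Y. \<forall>g \<in> hom C X Y. c_add C f g = c_add C g f) \<and>
        (\<forall>f \<in> hom C X Y. c_add C f (c_zer C X Y) = f) \<and>
        (\<forall>f \<in> hom C X Y. c_add C f (c_neg C f) = c_zer C X Y)) \<and>
     (\<forall>X \<in> c_ob C. \<forall>Y \<in> c_ob C. \<forall>Z \<in> c_ob C.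
        (\<forall>f \<in> hom C X Y. \<forall>g \<in> hom C Y Z. \<forall>g' \<in> hom C Y Z.
            c_cmp C (c_add C g g') f = c_add C (c_cmp C g f) (c_cmp C g' f)) \<and>
        (\<forall>f \<in> hom C X Y. \<forall>f' \<in> hom C X Y. \<forall>g \<in> hom C Y Z.
            c_cmp C g (c_add C f f') = c_add C (c_cmp C g f) (c_cmp C g f')))"

definition is_additive :: "('o,'m) acat \<Rightarrow> bool" where
  "is_additive C \<longleftrightarrow> is_preadditive C \<and>
     c_zobj C \<in> c_ob C \<and>
     (\<forall>X \<in> c_ob C. hom C (c_zobj C) X = {c_zer C (c_zobj C) X} \<and>
                   hom C X (c_zobj C) = {c_zer C X (c_zobj C)}) \<and>
     (\<forall>X \<in> c_ob C. \<forall>Y \<in> c_ob C.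
        c_dsum C X Y \<in> c_ob C \<and>
        c_in1 C X Y \<in> hom C X (c_dsum C X Y) \<and>
        c_in2 C X Y \<in> hom C Y (c_dsum C X Y) \<and>
        c_pr1 C X Y \<in> hom C (c_dsum C X Y) X \<and>
        c_pr2 C X Y \<in> hom C (c_dsum C X Y) Y \<and>
        c_cmp C (c_pr1 C X Y) (c_in1 C X Y) = c_id C X \<and>
        c_cmp C (c_pr2 C X Y) (c_in2 C X Y) = c_id C Y \<and>
        c_cmp C (c_pr1 C X Y) (c_in2 C X Y) = c_zer C Y X \<and>
        c_cmp C (c_pr2 C X Y) (c_in1 C X Y) = c_zer C X Y \<and>
        c_add C (c_cmp C (c_in1 C X Y) (c_pr1 C X Y)) (c_cmp C (c_in2 C X Y) (c_pr2 C X Y))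
          = c_id C (c_dsum C X Y))"

definition is_shift_auto :: "('o,'m) acat \<Rightarrow> bool" where
  "is_shift_auto C \<longleftrightarrow>
     (\<forall>f \<in> c_mor C. c_shM C f \<in> hom C (c_shO C (c_dom C f)) (c_shO C (c_cod C f))) \<and>
     (\<forall>X \<in> c_ob C. c_shM C (c_id C X) = c_id C (c_shO C X)) \<and>
     (\<forall>f \<in> c_mor C. \<forall>g \<in> c_mor C. c_cod C f = c_dom C g \<longrightarrow>
         c_shM C (c_cmp C g f) = c_cmp C (c_shM C g) (c_shM C f)) \<and>
     bij_betw (c_shO C) (c_ob C) (c_ob C) \<and>
     bij_betw (c_shM C) (c_mor C) (c_mor C) \<and>
     (\<forall>X \<in> c_ob C. \<forall>Y \<in> c_ob C. \<forall>f \<in> hom C X Y. \<forall>g \<in> hom C X Y.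
         c_shM C (c_add C f g) = c_add C (c_shM C f) (c_shM C g))"

text \<open>An n-\<Sigma>-sequence: objects A 1 .. A n and maps \<alpha> 1 .. \<alpha> n
(values outside 1..n are irrelevant).\<close>
type_synonym ('o,'m) nseq = "(nat \<Rightarrow> 'o) \<times> (nat \<Rightarrow> 'm)"

definition sgnm :: "('o,'m) acat \<Rightarrow> nat \<Rightarrow> 'm \<Rightarrow> 'm" where
  "sgnm C k f = (if even k then f else c_neg C f)"

text \<open>Matrix [a b; c d] : X1 \<oplus> X2 \<rightarrow> Y1 \<oplus> Y2, given source projections p1 p2
and target injections j1 j2.\<close>
definition mat :: "('o,'m) acat \<Rightarrow> 'm \<Rightarrow> 'm \<Rightarrow> 'm \<Rightarrow> 'm \<Rightarrow> 'm \<Rightarrow> 'm \<Rightarrow> 'm \<Rightarrow> 'm \<Rightarrow> 'm" where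
  "mat C p1 p2 j1 j2 a b c d =
     c_add C (c_add C (c_cmp C j1 (c_cmp C a p1)) (c_cmp C j1 (c_cmp C b p2)))
             (c_add C (c_cmp C j2 (c_cmp C c p1)) (c_cmp C j2 (c_cmp C d p2)))"

definition matD :: "('o,'m) acat \<Rightarrow> 'o \<Rightarrow> 'o \<Rightarrow> 'o \<Rightarrow> 'o \<Rightarrow> 'm \<Rightarrow> 'm \<Rightarrow> 'm \<Rightarrow> 'm \<Rightarrow> 'm" where
  "matD C X1 X2 Y1 Y2 a b c d =
     mat C (c_pr1 C X1 X2) (c_pr2 C X1 X2) (c_in1 C Y1 Y2) (c_in2 C Y1 Y2) a b c d"

definition is_seq :: "('o,'m) acat \<Rightarrow> nat \<Rightarrow> ('o,'m) nseq \<Rightarrow> bool" where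
  "is_seq C n S \<longleftrightarrow>
     (\<forall>i \<in> {1..n}. fst S i \<in> c_ob C) \<and>
     (\<forall>i \<in> {1..<n}. snd S i \<in> hom C (fst S i) (fst S (Suc i))) \<and>
     snd S n \<in> hom C (fst S n) (c_shO C (fst S 1))"

definition rot :: "('o,'m) acat \<Rightarrow> nat \<Rightarrow> ('o,'m) nseq \<Rightarrow> ('o,'m) nseq" where
  "rot C n S =
     ((\<lambda>i. if i = n then c_shO C (fst S 1) else fst S (Suc i)),
      (\<lambda>i. if i = n then sgnm C n (c_shM C (snd S 1)) else snd S (Suc i)))"

definition is_smor :: "('o,'m) acat \<Rightarrow> nat \<Rightarrow> ('o,'m) nseq \<Rightarrow> ('o,'m) nseq \<Rightarrow> (nat \<Rightarrow> 'm) \<Rightarrow> bool" where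
  "is_smor C n S T \<phi> \<longleftrightarrow> is_seq C n S \<and> is_seq C n T \<and>
     (\<forall>i \<in> {1..n}. \<phi> i \<in> hom C (fst S i) (fst T i)) \<and>
     (\<forall>i \<in> {1..<n}. c_cmp C (\<phi> (Suc i)) (snd S i) = c_cmp C (snd T i) (\<phi> i)) \<and>
     c_cmp C (c_shM C (\<phi> 1)) (snd S n) = c_cmp C (snd T n) (\<phi> n)"

definition is_siso :: "('o,'m) acat \<Rightarrow> nat \<Rightarrow> ('o,'m) nseq \<Rightarrow> ('o,'m) nseq \<Rightarrow> (nat \<Rightarrow> 'm) \<Rightarrow> bool" where
  "is_siso C n S T \<phi> \<longleftrightarrow> is_smor C n S T \<phi> \<and>
     (\<forall>i \<in> {1..n}. \<exists>\<psi> \<in> hom C (fst T i) (fst S i).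
        c_cmp C \<psi> (\<phi> i) = c_id C (fst S i) \<and> c_cmp C (\<phi> i) \<psi> = c_id C (fst T i))"

text \<open>Termwise direct sum; the last map lands in \<Sigma>(A1 \<oplus> B1), whose biproduct
structure is the \<Sigma>-image of that of A1 \<oplus> B1.\<close>
definition ssum :: "('o,'m) acat \<Rightarrow> nat \<Rightarrow> ('o,'m) nseq \<Rightarrow> ('o,'m) nseq \<Rightarrow> ('o,'m) nseq" where
  "ssum C n S T =
     ((\<lambda>i. c_dsum C (fst S i) (fst T i)),
      (\<lambda>i. if i < n then
             matD C (fst S i) (fst T i) (fst S (Suc i)) (fst T (Suc i))
               (snd S i) (c_zer C (fst T i) (fst S (Suc i)))
               (c_zer C (fst S i) (fst T (Suc i))) (snd T i)
           else
             mat C (c_pr1 C (fst S n) (fst T n)) (c_pr2 C (fst S n) (fst T n))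
               (c_shM C (c_in1 C (fst S 1) (fst T 1))) (c_shM C (c_in2 C (fst S 1) (fst T 1)))
               (snd S n) (c_zer C (fst T n) (c_shO C (fst S 1)))
               (c_zer C (fst S n) (c_shO C (fst T 1))) (snd T n)))"

definition is_summand :: "('o,'m) acat \<Rightarrow> nat \<Rightarrow> ('o,'m) nseq \<Rightarrow> ('o,'m) nseq \<Rightarrow> bool" where
  "is_summand C n S T \<longleftrightarrow> (\<exists>\<phi> \<psi>. is_smor C n S T \<phi> \<and> is_smor C n T S \<psi> \<and>
     (\<forall>i \<in> {1..n}. c_cmp C (\<psi> i) (\<phi> i) = c_id C (fst S i)))"

text \<open>Objects A(i+1) \<oplus> B i (with A(n+1) = \<Sigma>A1);
the last map lands in \<Sigma>(A2 \<oplus> B1) = \<Sigma>A2 \<oplus> \<Sigma>B1 via \<Sigma> of the injections.\<close>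
definition cone :: "('o,'m) acat \<Rightarrow> nat \<Rightarrow> ('o,'m) nseq \<Rightarrow> ('o,'m) nseq \<Rightarrow> (nat \<Rightarrow> 'm) \<Rightarrow> ('o,'m) nseq" where
  "cone C n S T \<phi> =
     (let A = fst S; \<alpha> = snd S; B = fst T; \<beta> = snd T;
          Ax = (\<lambda>i. if i = Suc n then c_shO C (A 1) else A i)
      in ((\<lambda>i. c_dsum C (Ax (Suc i)) (B i)),
          (\<lambda>i. if i < n then
                 matD C (Ax (Suc i)) (B i) (Ax (Suc (Suc i))) (B (Suc i))
                   (c_neg C (\<alpha> (Suc i))) (c_zer C (B i) (Ax (Suc (Suc i))))
                   (\<phi> (Suc i)) (\<beta> i)
               else
                 mat C (c_pr1 C (c_shO C (A 1)) (B n)) (c_pr2 C (c_shO C (A 1)) (B n))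
                   (c_shM C (c_in1 C (A 2) (B 1))) (c_shM C (c_in2 C (A 2) (B 1)))
                   (c_neg C (c_shM C (\<alpha> 1))) (c_zer C (B n) (c_shO C (A 2)))
                   (c_shM C (\<phi> 1)) (\<beta> n))))"

definition triv_seq :: "('o,'m) acat \<Rightarrow> nat \<Rightarrow> 'o \<Rightarrow> ('o,'m) nseq" where
  "triv_seq C n X =
     (let Ob = (\<lambda>i. if i \<le> 2 then X else c_zobj C)
      in (Ob, (\<lambda>i. if i = 1 then c_id C X
                 else if i < n then c_zer C (Ob i) (Ob (Suc i))
                 else c_zer C (c_zobj C) (c_shO C X))))"

definition n_angulated :: "('o,'m) acat \<Rightarrow> nat \<Rightarrow> ('o,'m) nseq set \<Rightarrow> bool" where
  "n_angulated C n N \<longleftrightarrow>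
     is_additive C \<and> is_shift_auto C \<and> 3 \<le> n \<and>
     N \<subseteq> {S. is_seq C n S} \<and>
     \<comment> \<open>(N1)(a)\<close>
     (\<forall>S \<in> N. \<forall>T \<in> N. ssum C n S T \<in> N) \<and>
     (\<forall>S T. T \<in> N \<and> is_seq C n S \<and> is_summand C n S T \<longrightarrow> S \<in> N) \<and>
     (\<forall>S T. S \<in> N \<and> (\<exists>\<phi>. is_siso C n S T \<phi>) \<longrightarrow> T \<in> N) \<and>
     \<comment> \<open>(N1)(b)\<close>
     (\<forall>X \<in> c_ob C. triv_seq C n X \<in> N) \<and>
     \<comment> \<open>(N1)(c)\<close>
     (\<forall>X \<in> c_ob C. \<forall>Y \<in> c_ob C. \<forall>f \<in> hom C X Y.
        \<exists>S \<in> N. fst S 1 = X \<and> fst S 2 = Y \<and> snd S 1 = f) \<and>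
     \<comment> \<open>(N2)\<close>
     (\<forall>S. is_seq C n S \<longrightarrow> (S \<in> N \<longleftrightarrow> rot C n S \<in> N)) \<and>
     \<comment> \<open>(N3)\<close>
     (\<forall>S \<in> N. \<forall>T \<in> N. \<forall>f1 f2.
        f1 \<in> hom C (fst S 1) (fst T 1) \<longrightarrow> f2 \<in> hom C (fst S 2) (fst T 2) \<longrightarrow>
        c_cmp C f2 (snd S 1) = c_cmp C (snd T 1) f1 \<longrightarrow>
        (\<exists>\<phi>. \<phi> 1 = f1 \<and> \<phi> 2 = f2 \<and> is_smor C n S T \<phi>)) \<and>
     \<comment> \<open>(N4)\<close>
     (\<forall>S \<in> N. \<forall>T \<in> N. \<forall>f1 f2.
        f1 \<in> hom C (fst S 1) (fst T 1) \<longrightarrow> f2 \<in> hom C (fst S 2) (fst T 2) \<longrightarrow>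
        c_cmp C f2 (snd S 1) = c_cmp C (snd T 1) f1 \<longrightarrow>
        (\<exists>\<phi>. \<phi> 1 = f1 \<and> \<phi> 2 = f2 \<and> is_smor C n S T \<phi> \<and> cone C n S T \<phi> \<in> N))"

definition lem_seq :: "('o,'m) acat \<Rightarrow> nat \<Rightarrow> (nat \<Rightarrow> 'o) \<Rightarrow> (nat \<Rightarrow> 'm) \<Rightarrow> (nat \<Rightarrow> 'o) \<Rightarrow> (nat \<Rightarrow> 'm) \<Rightarrow> (nat \<Rightarrow> 'm) \<Rightarrow> ('o,'m) nseq" where
  "lem_seq C n A \<alpha> B \<beta> \<phi> =
     ((\<lambda>k. if k = 1 then A 2 else if k < n then c_dsum C (A (Suc k)) (B k) else B n),
      (\<lambda>j. if j = 1 then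
             c_add C (c_cmp C (c_in1 C (A 3) (B 2)) (c_neg C (\<alpha> 2)))
                     (c_cmp C (c_in2 C (A 3) (B 2)) (\<phi> 2))
           else if j < n - 1 then
             matD C (A (Suc j)) (B j) (A (Suc (Suc j))) (B (Suc j))
               (\<alpha> (Suc j)) (c_zer C (B j) (A (Suc (Suc j))))
               (sgnm C j (\<phi> (Suc j))) (\<beta> j)
           else if j = n - 1 then
             c_add C (c_cmp C (sgnm C (Suc n) (\<phi> n)) (c_pr1 C (A n) (B (n - 1))))
                     (c_cmp C (\<beta> (n - 1)) (c_pr2 C (A n) (B (n - 1))))
           else c_cmp C (c_shM C (\<alpha> 1)) (\<beta> n)))"

end

theory Submission
  imports Defs
begin

text \<open>The sequence is a direct summand of the mapping cone of \<open>(1, \<phi>\<^sub>2, \<dots>, \<phi>\<^sub>n)\<close>, hence an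
  \<open>n\<close>-angle by (N1)(a). The first object \<open>A\<^sub>2 \<oplus> A\<^sub>1\<close> of the cone retracts onto \<open>A\<^sub>2\<close> via
  \<open>[1 \<alpha>\<^sub>1]\<close> with section \<open>[1; 0]\<close>, and the last object \<open>\<Sigma>A\<^sub>1 \<oplus> B\<^sub>n\<close> retracts onto \<open>B\<^sub>n\<close> via
  \<open>[0 1]\<close> with section \<open>[-\<beta>\<^sub>n; 1]\<close>. In between the objects agree and the maps differ only in
  the signs of their \<open>\<alpha>\<close>- and \<open>\<phi>\<close>-entries, which the automorphisms \<open>diag((-1)\<^sup>i, 1)\<close>
  absorb. Commutativity of the end squares uses \<open>\<phi>\<^sub>2 \<alpha>\<^sub>1 = \<beta>\<^sub>1\<close>, \<open>\<beta>\<^sub>n \<phi>\<^sub>n = \<alpha>\<^sub>n\<close> (as \<open>\<phi>\<^sub>1 = 1\<close>)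
  and the vanishing of \<open>\<alpha>\<^sub>2 \<alpha>\<^sub>1\<close> and \<open>\<beta>\<^sub>n \<beta>\<^sub>n\<^sub>-\<^sub>1\<close>, valid in every \<open>n\<close>-angle.\<close>

section \<open>Preadditive categories\<close>

locale preadditive_cat =
  fixes C :: "('o,'m) acat"
  assumes preadditive: "is_preadditive C"
begin

lemma category: "is_category C"
  using preadditive by (simp add: is_preadditive_def)

lemma dom_in_ob[simp]: "f \<in> c_mor C \<Longrightarrow> c_dom C f \<in> c_ob C"
  and cod_in_ob[simp]: "f \<in> c_mor C \<Longrightarrow> c_cod C f \<in> c_ob C"
  using category by (simp_all add: is_category_def)

lemma cmp_in_hom:
  "f \<in> c_mor C \<Longrightarrow> g \<in> c_mor C \<Longrightarrow> c_cod C f = c_dom C g \<Longrightarrow>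
   c_cmp C g f \<in> hom C (c_dom C f) (c_cod C g)"
  using category unfolding is_category_def by blast

lemma cmp_mor[simp]: "f \<in> c_mor C \<Longrightarrow> g \<in> c_mor C \<Longrightarrow> c_cod C f = c_dom C g \<Longrightarrow> c_cmp C g f \<in> c_mor C"
  and dom_cmp[simp]: "f \<in> c_mor C \<Longrightarrow> g \<in> c_mor C \<Longrightarrow> c_cod C f = c_dom C g \<Longrightarrow> c_dom C (c_cmp C g f) = c_dom C f"
  and cod_cmp[simp]: "f \<in> c_mor C \<Longrightarrow> g \<in> c_mor C \<Longrightarrow> c_cod C f = c_dom C g \<Longrightarrow> c_cod C (c_cmp C g f) = c_cod C g"
  using cmp_in_hom by (simp_all add: hom_def)

lemma id_mor[simp]: "X \<in> c_ob C \<Longrightarrow> c_id C X \<in> c_mor C"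
  and dom_id[simp]: "X \<in> c_ob C \<Longrightarrow> c_dom C (c_id C X) = X"
  and cod_id[simp]: "X \<in> c_ob C \<Longrightarrow> c_cod C (c_id C X) = X"
  using category by (auto simp add: is_category_def hom_def)

lemma cmp_assoc[simp]:
  "f \<in> c_mor C \<Longrightarrow> g \<in> c_mor C \<Longrightarrow> h \<in> c_mor C \<Longrightarrow>
   c_cod C f = c_dom C g \<Longrightarrow> c_cod C g = c_dom C h \<Longrightarrow>
   c_cmp C (c_cmp C h g) f = c_cmp C h (c_cmp C g f)"
  using category unfolding is_category_def by metis

lemma cmp_id_left[simp]: "f \<in> c_mor C \<Longrightarrow> c_cod C f = X \<Longrightarrow> c_cmp C (c_id C X) f = f"
  and cmp_id_right[simp]: "f \<in> c_mor C \<Longrightarrow> c_dom C f = X \<Longrightarrow> c_cmp C f (c_id C X) = f"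
  using category unfolding is_category_def by blast+

lemma hom_group:
  assumes "X \<in> c_ob C" "Y \<in> c_ob C"
  shows "c_zer C X Y \<in> hom C X Y"
    and "f \<in> hom C X Y \<Longrightarrow> g \<in> hom C X Y \<Longrightarrow> c_add C f g \<in> hom C X Y"
    and "f \<in> hom C X Y \<Longrightarrow> c_neg C f \<in> hom C X Y"
    and "f \<in> hom C X Y \<Longrightarrow> g \<in> hom C X Y \<Longrightarrow> h \<in> hom C X Y \<Longrightarrow>
      c_add C (c_add C f g) h = c_add C f (c_add C g h)"
    and "f \<in> hom C X Y \<Longrightarrow> g \<in> hom C X Y \<Longrightarrow> c_add C f g = c_add C g f"
    and "f \<in> hom C X Y \<Longrightarrow> c_add C f (c_zer C X Y) = f"
    and "f \<in> hom C X Y \<Longrightarrow> c_add C f (c_neg C f) = c_zer C X Y"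
  using preadditive assms unfolding is_preadditive_def by blast+

lemma cmp_bilinear:
  assumes "X \<in> c_ob C" "Y \<in> c_ob C" "Z \<in> c_ob C"
  shows "f \<in> hom C X Y \<Longrightarrow> g \<in> hom C Y Z \<Longrightarrow> g' \<in> hom C Y Z \<Longrightarrow>
      c_cmp C (c_add C g g') f = c_add C (c_cmp C g f) (c_cmp C g' f)"
    and "f \<in> hom C X Y \<Longrightarrow> f' \<in> hom C X Y \<Longrightarrow> g \<in> hom C Y Z \<Longrightarrow>
      c_cmp C g (c_add C f f') = c_add C (c_cmp C g f) (c_cmp C g f')"
  using preadditive[unfolded is_preadditive_def, THEN conjunct2, THEN conjunct2] assms by blast+

lemma zer_mor[simp]: "X \<in> c_ob C \<Longrightarrow> Y \<in> c_ob C \<Longrightarrow> c_zer C X Y \<in> c_mor C"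
  and dom_zer[simp]: "X \<in> c_ob C \<Longrightarrow> Y \<in> c_ob C \<Longrightarrow> c_dom C (c_zer C X Y) = X"
  and cod_zer[simp]: "X \<in> c_ob C \<Longrightarrow> Y \<in> c_ob C \<Longrightarrow> c_cod C (c_zer C X Y) = Y"
  using hom_group(1)[of X Y] by (auto simp: hom_def)

lemma add_mor[simp]:
    "f \<in> c_mor C \<Longrightarrow> g \<in> c_mor C \<Longrightarrow> c_dom C g = c_dom C f \<Longrightarrow> c_cod C g = c_cod C f \<Longrightarrow> c_add C f g \<in> c_mor C"
  and dom_add[simp]:
    "f \<in> c_mor C \<Longrightarrow> g \<in> c_mor C \<Longrightarrow> c_dom C g = c_dom C f \<Longrightarrow> c_cod C g = c_cod C f \<Longrightarrow> c_dom C (c_add C f g) = c_dom C f"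
  and cod_add[simp]:
    "f \<in> c_mor C \<Longrightarrow> g \<in> c_mor C \<Longrightarrow> c_dom C g = c_dom C f \<Longrightarrow> c_cod C g = c_cod C f \<Longrightarrow> c_cod C (c_add C f g) = c_cod C f"
  using hom_group(2)[of "c_dom C f" "c_cod C f" f g] by (auto simp: hom_def)

lemma neg_mor[simp]: "f \<in> c_mor C \<Longrightarrow> c_neg C f \<in> c_mor C"
  and dom_neg[simp]: "f \<in> c_mor C \<Longrightarrow> c_dom C (c_neg C f) = c_dom C f"
  and cod_neg[simp]: "f \<in> c_mor C \<Longrightarrow> c_cod C (c_neg C f) = c_cod C f"
  using hom_group(3)[of "c_dom C f" "c_cod C f" f] by (auto simp: hom_def)

lemma add_assoc_mor[simp]:
  "f \<in> c_mor C \<Longrightarrow> g \<in> c_mor C \<Longrightarrow> h \<in> c_mor C \<Longrightarrow>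
   c_dom C g = c_dom C f \<Longrightarrow> c_cod C g = c_cod C f \<Longrightarrow> c_dom C h = c_dom C f \<Longrightarrow> c_cod C h = c_cod C f \<Longrightarrow>
   c_add C (c_add C f g) h = c_add C f (c_add C g h)"
  using hom_group(4)[of "c_dom C f" "c_cod C f" f g h] by (auto simp: hom_def)

lemma add_comm_mor:
  "f \<in> c_mor C \<Longrightarrow> g \<in> c_mor C \<Longrightarrow> c_dom C g = c_dom C f \<Longrightarrow> c_cod C g = c_cod C f \<Longrightarrow>
   c_add C f g = c_add C g f"
  using hom_group(5)[of "c_dom C f" "c_cod C f" f g] by (auto simp: hom_def)

lemma add_left_comm_mor:
  "f \<in> c_mor C \<Longrightarrow> g \<in> c_mor C \<Longrightarrow> h \<in> c_mor C \<Longrightarrow>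
   c_dom C g = c_dom C f \<Longrightarrow> c_cod C g = c_cod C f \<Longrightarrow> c_dom C h = c_dom C f \<Longrightarrow> c_cod C h = c_cod C f \<Longrightarrow>
   c_add C f (c_add C g h) = c_add C g (c_add C f h)"
  by (metis add_assoc_mor add_comm_mor)

lemmas add_ac_mor = add_comm_mor add_left_comm_mor

lemma add_zer_right[simp]: "f \<in> c_mor C \<Longrightarrow> c_dom C f = X \<Longrightarrow> c_cod C f = Y \<Longrightarrow> c_add C f (c_zer C X Y) = f"
  using hom_group(6)[of X Y f] by (auto simp: hom_def)

lemma add_zer_left[simp]: "f \<in> c_mor C \<Longrightarrow> c_dom C f = X \<Longrightarrow> c_cod C f = Y \<Longrightarrow> c_add C (c_zer C X Y) f = f"
  by (metis add_comm_mor add_zer_right cod_in_ob cod_zer dom_in_ob dom_zer zer_mor)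

lemma add_neg_right[simp]: "f \<in> c_mor C \<Longrightarrow> c_add C f (c_neg C f) = c_zer C (c_dom C f) (c_cod C f)"
  using hom_group(7)[of "c_dom C f" "c_cod C f" f] by (auto simp: hom_def)

lemma add_neg_left[simp]: "f \<in> c_mor C \<Longrightarrow> c_add C (c_neg C f) f = c_zer C (c_dom C f) (c_cod C f)"
  by (metis add_comm_mor add_neg_right cod_neg dom_neg neg_mor)

lemma cmp_add_left[simp]:
  "f \<in> c_mor C \<Longrightarrow> g \<in> c_mor C \<Longrightarrow> g' \<in> c_mor C \<Longrightarrow> c_cod C f = c_dom C g \<Longrightarrow>
   c_dom C g' = c_dom C g \<Longrightarrow> c_cod C g' = c_cod C g \<Longrightarrow>
   c_cmp C (c_add C g g') f = c_add C (c_cmp C g f) (c_cmp C g' f)"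
  using cmp_bilinear(1)[of "c_dom C f" "c_cod C f" "c_cod C g" f g g'] by (auto simp: hom_def)

lemma cmp_add_right[simp]:
  "f \<in> c_mor C \<Longrightarrow> f' \<in> c_mor C \<Longrightarrow> g \<in> c_mor C \<Longrightarrow> c_cod C f = c_dom C g \<Longrightarrow>
   c_dom C f' = c_dom C f \<Longrightarrow> c_cod C f' = c_cod C f \<Longrightarrow>
   c_cmp C g (c_add C f f') = c_add C (c_cmp C g f) (c_cmp C g f')"
  using cmp_bilinear(2)[of "c_dom C f" "c_cod C f" "c_cod C g" f f' g] by (auto simp: hom_def)

lemma add_idem_eq_zer:
  assumes "x \<in> c_mor C" "c_add C x x = x"
  shows "x = c_zer C (c_dom C x) (c_cod C x)"
proof -
  have "c_zer C (c_dom C x) (c_cod C x) = c_add C (c_add C x x) (c_neg C x)"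
    using assms by simp
  also have "\<dots> = x"
    using assms(1) by (subst add_assoc_mor) auto
  finally show ?thesis by simp
qed

lemma cmp_zer_right[simp]:
  assumes "f \<in> c_mor C" "c_dom C f = Y" "X \<in> c_ob C"
  shows "c_cmp C f (c_zer C X Y) = c_zer C X (c_cod C f)"
proof -
  have Y: "Y \<in> c_ob C" using dom_in_ob[OF assms(1)] assms(2) by simp
  let ?x = "c_cmp C f (c_zer C X Y)"
  have "c_add C ?x ?x = c_cmp C f (c_add C (c_zer C X Y) (c_zer C X Y))"
    using assms Y by (subst cmp_add_right) auto
  also have "\<dots> = ?x" using assms Y by simp
  finally show ?thesis using assms Y add_idem_eq_zer[of ?x] by simp
qed

lemma cmp_zer_left[simp]:
  assumes "f \<in> c_mor C" "c_cod C f = Y" "Z \<in> c_ob C"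
  shows "c_cmp C (c_zer C Y Z) f = c_zer C (c_dom C f) Z"
proof -
  have Y: "Y \<in> c_ob C" using cod_in_ob[OF assms(1)] assms(2) by simp
  let ?x = "c_cmp C (c_zer C Y Z) f"
  have "c_add C ?x ?x = c_cmp C (c_add C (c_zer C Y Z) (c_zer C Y Z)) f"
    using assms Y by (subst cmp_add_left) auto
  also have "\<dots> = ?x" using assms Y by simp
  finally show ?thesis using assms Y add_idem_eq_zer[of ?x] by simp
qed

lemma neg_unique:
  assumes "f \<in> c_mor C" "g \<in> c_mor C" "c_dom C g = c_dom C f" "c_cod C g = c_cod C f"
    and "c_add C f g = c_zer C (c_dom C f) (c_cod C f)"
  shows "g = c_neg C f"
proof -
  have "g = c_add C (c_add C (c_neg C f) f) g" using assms by simp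
  also have "\<dots> = c_neg C f" using assms by (subst add_assoc_mor) auto
  finally show ?thesis .
qed

lemma neg_neg[simp]: "f \<in> c_mor C \<Longrightarrow> c_neg C (c_neg C f) = f"
  using neg_unique[of "c_neg C f" f] by simp

lemma neg_zer[simp]: "X \<in> c_ob C \<Longrightarrow> Y \<in> c_ob C \<Longrightarrow> c_neg C (c_zer C X Y) = c_zer C X Y"
  using neg_unique[of "c_zer C X Y" "c_zer C X Y"] by simp

lemma cmp_neg_left[simp]:
  assumes "f \<in> c_mor C" "g \<in> c_mor C" "c_cod C f = c_dom C g"
  shows "c_cmp C (c_neg C g) f = c_neg C (c_cmp C g f)"
proof (rule neg_unique)
  have "c_add C (c_cmp C g f) (c_cmp C (c_neg C g) f) = c_cmp C (c_add C g (c_neg C g)) f"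
    using assms by (subst cmp_add_left) auto
  then show "c_add C (c_cmp C g f) (c_cmp C (c_neg C g) f) =
      c_zer C (c_dom C (c_cmp C g f)) (c_cod C (c_cmp C g f))"
    using assms by simp
qed (use assms in auto)

lemma cmp_neg_right[simp]:
  assumes "f \<in> c_mor C" "g \<in> c_mor C" "c_cod C f = c_dom C g"
  shows "c_cmp C g (c_neg C f) = c_neg C (c_cmp C g f)"
proof (rule neg_unique)
  have "c_add C (c_cmp C g f) (c_cmp C g (c_neg C f)) = c_cmp C g (c_add C f (c_neg C f))"
    using assms by (subst cmp_add_right) auto
  then show "c_add C (c_cmp C g f) (c_cmp C g (c_neg C f)) =
      c_zer C (c_dom C (c_cmp C g f)) (c_cod C (c_cmp C g f))"
    using assms by simp
qed (use assms in auto)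

section \<open>Biproducts and block matrices\<close>

definition is_biprod :: "'m \<Rightarrow> 'm \<Rightarrow> 'm \<Rightarrow> 'm \<Rightarrow> bool" where
  "is_biprod p1 p2 j1 j2 \<longleftrightarrow> p1 \<in> c_mor C \<and> p2 \<in> c_mor C \<and> j1 \<in> c_mor C \<and> j2 \<in> c_mor C \<and>
     c_dom C p2 = c_dom C p1 \<and> c_cod C j1 = c_dom C p1 \<and> c_cod C j2 = c_dom C p1 \<and>
     c_dom C j1 = c_cod C p1 \<and> c_dom C j2 = c_cod C p2 \<and>
     c_cmp C p1 j1 = c_id C (c_cod C p1) \<and> c_cmp C p2 j2 = c_id C (c_cod C p2) \<and>
     c_cmp C p1 j2 = c_zer C (c_cod C p2) (c_cod C p1) \<and>
     c_cmp C p2 j1 = c_zer C (c_cod C p1) (c_cod C p2) \<and>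
     c_add C (c_cmp C j1 p1) (c_cmp C j2 p2) = c_id C (c_dom C p1)"

lemma is_biprodD:
  assumes "is_biprod p1 p2 j1 j2"
  shows "p1 \<in> c_mor C" "p2 \<in> c_mor C" "j1 \<in> c_mor C" "j2 \<in> c_mor C"
    "c_dom C p2 = c_dom C p1" "c_cod C j1 = c_dom C p1" "c_cod C j2 = c_dom C p1"
    "c_dom C j1 = c_cod C p1" "c_dom C j2 = c_cod C p2"
    "c_cmp C p1 j1 = c_id C (c_cod C p1)" "c_cmp C p2 j2 = c_id C (c_cod C p2)"
    "c_cmp C p1 j2 = c_zer C (c_cod C p2) (c_cod C p1)"
    "c_cmp C p2 j1 = c_zer C (c_cod C p1) (c_cod C p2)"
    "c_add C (c_cmp C j1 p1) (c_cmp C j2 p2) = c_id C (c_dom C p1)"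
  using assms unfolding is_biprod_def by blast+

lemma is_biprod_cancel:
  assumes "is_biprod p1 p2 j1 j2" and "x \<in> c_mor C"
  shows "c_cod C x = c_cod C p1 \<Longrightarrow> c_cmp C p1 (c_cmp C j1 x) = x"
    and "c_cod C x = c_cod C p2 \<Longrightarrow> c_cmp C p2 (c_cmp C j2 x) = x"
    and "c_cod C x = c_cod C p2 \<Longrightarrow> c_cmp C p1 (c_cmp C j2 x) = c_zer C (c_dom C x) (c_cod C p1)"
    and "c_cod C x = c_cod C p1 \<Longrightarrow> c_cmp C p2 (c_cmp C j1 x) = c_zer C (c_dom C x) (c_cod C p2)"
  using is_biprodD[OF assms(1)] assms(2) by (simp_all flip: cmp_assoc)

text \<open>In the block-matrix notation of \<^const>\<open>mat\<close>, \<open>col j1 j2 a c\<close> is the column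
  \<open>[a; c]\<close> and \<open>row p1 p2 a b\<close> the row \<open>[a b]\<close>.\<close>

definition col :: "'m \<Rightarrow> 'm \<Rightarrow> 'm \<Rightarrow> 'm \<Rightarrow> 'm" where
  "col j1 j2 a c = c_add C (c_cmp C j1 a) (c_cmp C j2 c)"

definition row :: "'m \<Rightarrow> 'm \<Rightarrow> 'm \<Rightarrow> 'm \<Rightarrow> 'm" where
  "row p1 p2 a b = c_add C (c_cmp C a p1) (c_cmp C b p2)"

lemma col_mor[simp]:
  "j1 \<in> c_mor C \<Longrightarrow> j2 \<in> c_mor C \<Longrightarrow> a \<in> c_mor C \<Longrightarrow> c \<in> c_mor C \<Longrightarrow>
   c_cod C j2 = c_cod C j1 \<Longrightarrow> c_dom C c = c_dom C a \<Longrightarrow> c_cod C a = c_dom C j1 \<Longrightarrow> c_cod C c = c_dom C j2 \<Longrightarrow>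
   col j1 j2 a c \<in> c_mor C \<and> c_dom C (col j1 j2 a c) = c_dom C a \<and> c_cod C (col j1 j2 a c) = c_cod C j1"
  unfolding col_def by simp

lemma row_mor[simp]:
  "p1 \<in> c_mor C \<Longrightarrow> p2 \<in> c_mor C \<Longrightarrow> a \<in> c_mor C \<Longrightarrow> b \<in> c_mor C \<Longrightarrow>
   c_dom C p2 = c_dom C p1 \<Longrightarrow> c_cod C b = c_cod C a \<Longrightarrow> c_dom C a = c_cod C p1 \<Longrightarrow> c_dom C b = c_cod C p2 \<Longrightarrow>
   row p1 p2 a b \<in> c_mor C \<and> c_dom C (row p1 p2 a b) = c_dom C p1 \<and> c_cod C (row p1 p2 a b) = c_cod C a"
  unfolding row_def by simp

lemma mat_mor[simp]:
  "p1 \<in> c_mor C \<Longrightarrow> p2 \<in> c_mor C \<Longrightarrow> j1 \<in> c_mor C \<Longrightarrow> j2 \<in> c_mor C \<Longrightarrow>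
   a \<in> c_mor C \<Longrightarrow> b \<in> c_mor C \<Longrightarrow> c \<in> c_mor C \<Longrightarrow> d \<in> c_mor C \<Longrightarrow>
   c_dom C p2 = c_dom C p1 \<Longrightarrow> c_cod C j2 = c_cod C j1 \<Longrightarrow>
   c_dom C a = c_cod C p1 \<Longrightarrow> c_dom C b = c_cod C p2 \<Longrightarrow> c_dom C c = c_cod C p1 \<Longrightarrow> c_dom C d = c_cod C p2 \<Longrightarrow>
   c_cod C a = c_dom C j1 \<Longrightarrow> c_cod C b = c_dom C j1 \<Longrightarrow> c_cod C c = c_dom C j2 \<Longrightarrow> c_cod C d = c_dom C j2 \<Longrightarrow>
   mat C p1 p2 j1 j2 a b c d \<in> c_mor C \<and> c_dom C (mat C p1 p2 j1 j2 a b c d) = c_dom C p1 \<and>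
   c_cod C (mat C p1 p2 j1 j2 a b c d) = c_cod C j1"
  unfolding mat_def by simp

lemma mat_cmp_mat:
  assumes b: "is_biprod q1 q2 k1 k2"
  and m: "p1 \<in> c_mor C" "p2 \<in> c_mor C" "j1 \<in> c_mor C" "j2 \<in> c_mor C"
     "a \<in> c_mor C" "b \<in> c_mor C" "c \<in> c_mor C" "d \<in> c_mor C"
     "a' \<in> c_mor C" "b' \<in> c_mor C" "c' \<in> c_mor C" "d' \<in> c_mor C"
  and t: "c_dom C p2 = c_dom C p1" "c_cod C j2 = c_cod C j1"
     "c_dom C a = c_cod C p1" "c_dom C b = c_cod C p2" "c_dom C c = c_cod C p1" "c_dom C d = c_cod C p2"
     "c_cod C a = c_cod C q1" "c_cod C b = c_cod C q1" "c_cod C c = c_cod C q2" "c_cod C d = c_cod C q2"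
     "c_dom C a' = c_cod C q1" "c_dom C b' = c_cod C q2" "c_dom C c' = c_cod C q1" "c_dom C d' = c_cod C q2"
     "c_cod C a' = c_dom C j1" "c_cod C b' = c_dom C j1" "c_cod C c' = c_dom C j2" "c_cod C d' = c_dom C j2"
  shows "c_cmp C (mat C q1 q2 j1 j2 a' b' c' d') (mat C p1 p2 k1 k2 a b c d) =
     mat C p1 p2 j1 j2 (c_add C (c_cmp C a' a) (c_cmp C b' c)) (c_add C (c_cmp C a' b) (c_cmp C b' d))
                       (c_add C (c_cmp C c' a) (c_cmp C d' c)) (c_add C (c_cmp C c' b) (c_cmp C d' d))"
  using is_biprodD[OF b] m t unfolding mat_def by (simp add: is_biprod_cancel[OF b] add_ac_mor)

lemma mat_cmp_col:
  assumes b: "is_biprod p1 p2 k1 k2"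
  and m: "j1 \<in> c_mor C" "j2 \<in> c_mor C"
     "a \<in> c_mor C" "b \<in> c_mor C" "c \<in> c_mor C" "d \<in> c_mor C" "x \<in> c_mor C" "y \<in> c_mor C"
  and t: "c_cod C j2 = c_cod C j1"
     "c_dom C a = c_cod C p1" "c_dom C b = c_cod C p2" "c_dom C c = c_cod C p1" "c_dom C d = c_cod C p2"
     "c_cod C a = c_dom C j1" "c_cod C b = c_dom C j1" "c_cod C c = c_dom C j2" "c_cod C d = c_dom C j2"
     "c_cod C x = c_cod C p1" "c_cod C y = c_cod C p2" "c_dom C y = c_dom C x"
  shows "c_cmp C (mat C p1 p2 j1 j2 a b c d) (col k1 k2 x y) =
     col j1 j2 (c_add C (c_cmp C a x) (c_cmp C b y)) (c_add C (c_cmp C c x) (c_cmp C d y))"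
  using is_biprodD[OF b] m t unfolding mat_def col_def by (simp add: is_biprod_cancel[OF b] add_ac_mor)

lemma row_cmp_mat:
  assumes b: "is_biprod q1 q2 j1 j2"
  and m: "p1 \<in> c_mor C" "p2 \<in> c_mor C"
     "a \<in> c_mor C" "b \<in> c_mor C" "c \<in> c_mor C" "d \<in> c_mor C" "u \<in> c_mor C" "v \<in> c_mor C"
  and t: "c_dom C p2 = c_dom C p1"
     "c_dom C a = c_cod C p1" "c_dom C b = c_cod C p2" "c_dom C c = c_cod C p1" "c_dom C d = c_cod C p2"
     "c_cod C a = c_cod C q1" "c_cod C b = c_cod C q1" "c_cod C c = c_cod C q2" "c_cod C d = c_cod C q2"
     "c_dom C u = c_cod C q1" "c_dom C v = c_cod C q2" "c_cod C v = c_cod C u"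
  shows "c_cmp C (row q1 q2 u v) (mat C p1 p2 j1 j2 a b c d) =
     row p1 p2 (c_add C (c_cmp C u a) (c_cmp C v c)) (c_add C (c_cmp C u b) (c_cmp C v d))"
  using is_biprodD[OF b] m t unfolding mat_def row_def by (simp add: is_biprod_cancel[OF b] add_ac_mor)

lemma col_cmp_row:
  assumes m: "p1 \<in> c_mor C" "p2 \<in> c_mor C" "j1 \<in> c_mor C" "j2 \<in> c_mor C"
     "x \<in> c_mor C" "y \<in> c_mor C" "u \<in> c_mor C" "v \<in> c_mor C"
  and t: "c_dom C p2 = c_dom C p1" "c_cod C j2 = c_cod C j1"
     "c_dom C u = c_cod C p1" "c_dom C v = c_cod C p2" "c_cod C v = c_cod C u"
     "c_dom C x = c_cod C u" "c_dom C y = c_cod C u" "c_cod C x = c_dom C j1" "c_cod C y = c_dom C j2"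
  shows "c_cmp C (col j1 j2 x y) (row p1 p2 u v) =
     mat C p1 p2 j1 j2 (c_cmp C x u) (c_cmp C x v) (c_cmp C y u) (c_cmp C y v)"
  using m t unfolding mat_def row_def col_def by (simp add: add_ac_mor)

lemma row_cmp_col:
  assumes b: "is_biprod p1 p2 j1 j2"
  and m: "x \<in> c_mor C" "y \<in> c_mor C" "u \<in> c_mor C" "v \<in> c_mor C"
  and t: "c_dom C u = c_cod C p1" "c_dom C v = c_cod C p2" "c_cod C v = c_cod C u"
     "c_cod C x = c_cod C p1" "c_cod C y = c_cod C p2" "c_dom C y = c_dom C x"
  shows "c_cmp C (row p1 p2 u v) (col j1 j2 x y) = c_add C (c_cmp C u x) (c_cmp C v y)"
  using is_biprodD[OF b] m t unfolding row_def col_def by (simp add: is_biprod_cancel[OF b] add_ac_mor)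

lemma cmp_row:
  assumes m: "p1 \<in> c_mor C" "p2 \<in> c_mor C" "u \<in> c_mor C" "v \<in> c_mor C" "f \<in> c_mor C"
  and t: "c_dom C p2 = c_dom C p1"
     "c_dom C u = c_cod C p1" "c_dom C v = c_cod C p2" "c_cod C v = c_cod C u" "c_dom C f = c_cod C u"
  shows "c_cmp C f (row p1 p2 u v) = row p1 p2 (c_cmp C f u) (c_cmp C f v)"
  using m t unfolding row_def by simp

lemma col_cmp:
  assumes m: "j1 \<in> c_mor C" "j2 \<in> c_mor C" "x \<in> c_mor C" "y \<in> c_mor C" "f \<in> c_mor C"
  and t: "c_cod C j2 = c_cod C j1"
     "c_cod C x = c_dom C j1" "c_cod C y = c_dom C j2" "c_dom C y = c_dom C x" "c_cod C f = c_dom C x"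
  shows "c_cmp C (col j1 j2 x y) f = col j1 j2 (c_cmp C x f) (c_cmp C y f)"
  using m t unfolding col_def by simp

lemma mat_id:
  assumes b: "is_biprod p1 p2 j1 j2"
  shows "mat C p1 p2 j1 j2 (c_id C (c_cod C p1)) (c_zer C (c_cod C p2) (c_cod C p1))
            (c_zer C (c_cod C p1) (c_cod C p2)) (c_id C (c_cod C p2)) = c_id C (c_dom C p1)"
  using is_biprodD[OF b] unfolding mat_def by (simp flip: is_biprodD(14)[OF b])

end

locale preadditive_shift = preadditive_cat +
  assumes shift: "is_shift_auto C"
begin

lemma sh_ob[simp]: "X \<in> c_ob C \<Longrightarrow> c_shO C X \<in> c_ob C"
  using shift bij_betw_apply unfolding is_shift_auto_def by metis

lemma sh_mor[simp]: "f \<in> c_mor C \<Longrightarrow> c_shM C f \<in> c_mor C"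
  and dom_sh[simp]: "f \<in> c_mor C \<Longrightarrow> c_dom C (c_shM C f) = c_shO C (c_dom C f)"
  and cod_sh[simp]: "f \<in> c_mor C \<Longrightarrow> c_cod C (c_shM C f) = c_shO C (c_cod C f)"
  using shift[unfolded is_shift_auto_def, THEN conjunct1] by (simp_all add: hom_def)

lemma sh_id[simp]: "X \<in> c_ob C \<Longrightarrow> c_shM C (c_id C X) = c_id C (c_shO C X)"
  using shift unfolding is_shift_auto_def by blast

lemma sh_cmp[simp]:
  "f \<in> c_mor C \<Longrightarrow> g \<in> c_mor C \<Longrightarrow> c_cod C f = c_dom C g \<Longrightarrow>
   c_shM C (c_cmp C g f) = c_cmp C (c_shM C g) (c_shM C f)"
  using shift unfolding is_shift_auto_def by blast

lemma sh_add[simp]: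
  assumes "f \<in> c_mor C" "g \<in> c_mor C" "c_dom C g = c_dom C f" "c_cod C g = c_cod C f"
  shows "c_shM C (c_add C f g) = c_add C (c_shM C f) (c_shM C g)"
proof -
  have "f \<in> hom C (c_dom C f) (c_cod C f)" "g \<in> hom C (c_dom C f) (c_cod C f)"
    using assms by (simp_all add: hom_def)
  moreover have "\<forall>X \<in> c_ob C. \<forall>Y \<in> c_ob C. \<forall>f \<in> hom C X Y. \<forall>g \<in> hom C X Y.
      c_shM C (c_add C f g) = c_add C (c_shM C f) (c_shM C g)"
    using shift unfolding is_shift_auto_def by blast
  ultimately show ?thesis using dom_in_ob[OF assms(1)] cod_in_ob[OF assms(1)] by blast
qed

lemma sh_zer[simp]:
  assumes "X \<in> c_ob C" "Y \<in> c_ob C"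
  shows "c_shM C (c_zer C X Y) = c_zer C (c_shO C X) (c_shO C Y)"
proof -
  have "c_add C (c_shM C (c_zer C X Y)) (c_shM C (c_zer C X Y)) = c_shM C (c_zer C X Y)"
    using assms by (simp flip: sh_add)
  then show ?thesis using assms add_idem_eq_zer[of "c_shM C (c_zer C X Y)"] by simp
qed

lemma sh_neg[simp]:
  assumes "f \<in> c_mor C"
  shows "c_shM C (c_neg C f) = c_neg C (c_shM C f)"
proof (rule neg_unique)
  show "c_add C (c_shM C f) (c_shM C (c_neg C f)) =
      c_zer C (c_dom C (c_shM C f)) (c_cod C (c_shM C f))"
    using assms by (simp flip: sh_add)
qed (use assms in auto)

lemma is_biprod_sh[simp]:
  assumes "is_biprod p1 p2 j1 j2"
  shows "is_biprod (c_shM C p1) (c_shM C p2) (c_shM C j1) (c_shM C j2)"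
proof -
  note b = is_biprodD[OF assms]
  have "c_shM C (c_add C (c_cmp C j1 p1) (c_cmp C j2 p2)) = c_shM C (c_id C (c_dom C p1))"
    by (simp only: b(14))
  then have "c_add C (c_cmp C (c_shM C j1) (c_shM C p1)) (c_cmp C (c_shM C j2) (c_shM C p2)) =
      c_id C (c_shO C (c_dom C p1))"
    using b(1-9) by simp
  then show ?thesis
    using b unfolding is_biprod_def by (simp flip: sh_cmp add: b(10-13))
qed

lemma sh_col:
  assumes m: "j1 \<in> c_mor C" "j2 \<in> c_mor C" "x \<in> c_mor C" "y \<in> c_mor C"
  and t: "c_cod C j2 = c_cod C j1"
     "c_cod C x = c_dom C j1" "c_cod C y = c_dom C j2" "c_dom C y = c_dom C x"
  shows "c_shM C (col j1 j2 x y) = col (c_shM C j1) (c_shM C j2) (c_shM C x) (c_shM C y)"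
  using m t unfolding col_def by simp

lemma sh_row:
  assumes m: "p1 \<in> c_mor C" "p2 \<in> c_mor C" "u \<in> c_mor C" "v \<in> c_mor C"
  and t: "c_dom C p2 = c_dom C p1"
     "c_dom C u = c_cod C p1" "c_dom C v = c_cod C p2" "c_cod C v = c_cod C u"
  shows "c_shM C (row p1 p2 u v) = row (c_shM C p1) (c_shM C p2) (c_shM C u) (c_shM C v)"
  using m t unfolding row_def by simp

end

locale additive_cat =
  fixes C :: "('o,'m) acat"
  assumes additive: "is_additive C"

sublocale additive_cat \<subseteq> preadditive_cat
  using additive by unfold_locales (simp add: is_additive_def)

context additive_cat
begin

lemma zobj_ob[simp]: "c_zobj C \<in> c_ob C"
  using additive unfolding is_additive_def by blast

lemma dsum_biprod:
  assumes "X \<in> c_ob C" "Y \<in> c_ob C"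
  shows "c_dsum C X Y \<in> c_ob C"
    and "c_in1 C X Y \<in> hom C X (c_dsum C X Y)" "c_in2 C X Y \<in> hom C Y (c_dsum C X Y)"
    and "c_pr1 C X Y \<in> hom C (c_dsum C X Y) X" "c_pr2 C X Y \<in> hom C (c_dsum C X Y) Y"
    and "is_biprod (c_pr1 C X Y) (c_pr2 C X Y) (c_in1 C X Y) (c_in2 C X Y)"
  using additive[unfolded is_additive_def, THEN conjunct2, THEN conjunct2, THEN conjunct2] assms
  unfolding is_biprod_def hom_def by auto

lemma dsum_ob[simp]: "X \<in> c_ob C \<Longrightarrow> Y \<in> c_ob C \<Longrightarrow> c_dsum C X Y \<in> c_ob C"
  using dsum_biprod(1) .

lemmas is_biprod_dsum[simp] = dsum_biprod(6)

lemma in1_mor[simp]: "X \<in> c_ob C \<Longrightarrow> Y \<in> c_ob C \<Longrightarrow> c_in1 C X Y \<in> c_mor C"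
  and dom_in1[simp]: "X \<in> c_ob C \<Longrightarrow> Y \<in> c_ob C \<Longrightarrow> c_dom C (c_in1 C X Y) = X"
  and cod_in1[simp]: "X \<in> c_ob C \<Longrightarrow> Y \<in> c_ob C \<Longrightarrow> c_cod C (c_in1 C X Y) = c_dsum C X Y"
  and in2_mor[simp]: "X \<in> c_ob C \<Longrightarrow> Y \<in> c_ob C \<Longrightarrow> c_in2 C X Y \<in> c_mor C"
  and dom_in2[simp]: "X \<in> c_ob C \<Longrightarrow> Y \<in> c_ob C \<Longrightarrow> c_dom C (c_in2 C X Y) = Y"
  and cod_in2[simp]: "X \<in> c_ob C \<Longrightarrow> Y \<in> c_ob C \<Longrightarrow> c_cod C (c_in2 C X Y) = c_dsum C X Y"
  and pr1_mor[simp]: "X \<in> c_ob C \<Longrightarrow> Y \<in> c_ob C \<Longrightarrow> c_pr1 C X Y \<in> c_mor C"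
  and dom_pr1[simp]: "X \<in> c_ob C \<Longrightarrow> Y \<in> c_ob C \<Longrightarrow> c_dom C (c_pr1 C X Y) = c_dsum C X Y"
  and cod_pr1[simp]: "X \<in> c_ob C \<Longrightarrow> Y \<in> c_ob C \<Longrightarrow> c_cod C (c_pr1 C X Y) = X"
  and pr2_mor[simp]: "X \<in> c_ob C \<Longrightarrow> Y \<in> c_ob C \<Longrightarrow> c_pr2 C X Y \<in> c_mor C"
  and dom_pr2[simp]: "X \<in> c_ob C \<Longrightarrow> Y \<in> c_ob C \<Longrightarrow> c_dom C (c_pr2 C X Y) = c_dsum C X Y"
  and cod_pr2[simp]: "X \<in> c_ob C \<Longrightarrow> Y \<in> c_ob C \<Longrightarrow> c_cod C (c_pr2 C X Y) = Y"
  using dsum_biprod(2-5)[of X Y] by (auto simp: hom_def)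

lemma mat_id_dsum[simp]:
  "X \<in> c_ob C \<Longrightarrow> Y \<in> c_ob C \<Longrightarrow>
   mat C (c_pr1 C X Y) (c_pr2 C X Y) (c_in1 C X Y) (c_in2 C X Y)
     (c_id C X) (c_zer C Y X) (c_zer C X Y) (c_id C Y) = c_id C (c_dsum C X Y)"
  using mat_id[OF is_biprod_dsum[of X Y]] by simp

end

lemma is_seqD:
  assumes "is_seq C n S"
  shows "\<And>i. 1 \<le> i \<Longrightarrow> i \<le> n \<Longrightarrow> fst S i \<in> c_ob C"
    and "\<And>i. 1 \<le> i \<Longrightarrow> i < n \<Longrightarrow> snd S i \<in> hom C (fst S i) (fst S (Suc i))"
    and "snd S n \<in> hom C (fst S n) (c_shO C (fst S 1))"
  using assms unfolding is_seq_def by auto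

lemma is_smorD:
  assumes "is_smor C n S T \<phi>"
  shows "is_seq C n S" "is_seq C n T"
    and "\<And>i. 1 \<le> i \<Longrightarrow> i \<le> n \<Longrightarrow> \<phi> i \<in> hom C (fst S i) (fst T i)"
    and "\<And>i. 1 \<le> i \<Longrightarrow> i < n \<Longrightarrow> c_cmp C (\<phi> (Suc i)) (snd S i) = c_cmp C (snd T i) (\<phi> i)"
    and "c_cmp C (c_shM C (\<phi> 1)) (snd S n) = c_cmp C (snd T n) (\<phi> n)"
  using assms unfolding is_smor_def by auto

locale n_angulated_cat =
  fixes C :: "('o,'m) acat" and n :: nat and N :: "('o,'m) nseq set"
  assumes n_angulated: "n_angulated C n N"
begin

lemma n_ge_3: "3 \<le> n"
  using n_angulated unfolding n_angulated_def by blast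

lemma angle_is_seq:
  assumes "S \<in> N"
  shows "is_seq C n S"
proof -
  have "N \<subseteq> {S. is_seq C n S}"
    using n_angulated unfolding n_angulated_def by (elim conjE) assumption
  then show ?thesis using assms by blast
qed

lemma triv_seq_angle: "X \<in> c_ob C \<Longrightarrow> triv_seq C n X \<in> N"
  using n_angulated unfolding n_angulated_def by blast

lemma rot_angle_iff: "is_seq C n S \<Longrightarrow> rot C n S \<in> N \<longleftrightarrow> S \<in> N"
  using n_angulated unfolding n_angulated_def by blast

lemma summand_angle: "T \<in> N \<Longrightarrow> is_seq C n S \<Longrightarrow> is_summand C n S T \<Longrightarrow> S \<in> N"
  using n_angulated unfolding n_angulated_def by blast

lemma angle_morphism_exists:
  assumes "S \<in> N" "T \<in> N" "f1 \<in> hom C (fst S 1) (fst T 1)" "f2 \<in> hom C (fst S 2) (fst T 2)"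
    and "c_cmp C f2 (snd S 1) = c_cmp C (snd T 1) f1"
  shows "\<exists>\<phi>. \<phi> 1 = f1 \<and> \<phi> 2 = f2 \<and> is_smor C n S T \<phi>"
  using n_angulated assms unfolding n_angulated_def by blast

end

sublocale n_angulated_cat \<subseteq> additive_cat
  using n_angulated by unfold_locales (simp add: n_angulated_def)

sublocale n_angulated_cat \<subseteq> preadditive_shift
  using n_angulated by unfold_locales (simp add: n_angulated_def)

context n_angulated_cat
begin

text \<open>(N3) extends \<open>(1, \<alpha>\<^sub>1)\<close> to a morphism from the trivial angle on the first
  object; its third component starts at the zero object, so \<open>\<alpha>\<^sub>2 \<alpha>\<^sub>1\<close> factors through 0.\<close>

lemma angle_cmp_first_zer:
  assumes S: "S \<in> N"
  shows "c_cmp C (snd S 2) (snd S 1) = c_zer C (fst S 1) (fst S 3)"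
proof -
  have seq: "is_seq C n S" using angle_is_seq[OF S] .
  define X where "X = fst S 1"
  have X: "X \<in> c_ob C" using is_seqD(1)[OF seq, of 1] n_ge_3 X_def by simp
  have s1: "snd S 1 \<in> hom C X (fst S 2)"
    using is_seqD(2)[OF seq, of 1] n_ge_3 X_def by (simp add: numeral_2_eq_2)
  have triv: "fst (triv_seq C n X) 1 = X" "fst (triv_seq C n X) 2 = X"
    "snd (triv_seq C n X) 1 = c_id C X" "fst (triv_seq C n X) 3 = c_zobj C"
    "snd (triv_seq C n X) 2 = c_zer C X (c_zobj C)"
    using n_ge_3 by (auto simp: triv_seq_def Let_def)
  obtain \<phi> where \<phi>: "\<phi> 2 = snd S 1" "is_smor C n (triv_seq C n X) S \<phi>"
    using angle_morphism_exists[OF triv_seq_angle[OF X] S, of "c_id C X" "snd S 1"] triv s1 X X_def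
    by (auto simp: hom_def)
  have "c_cmp C (\<phi> 3) (c_zer C X (c_zobj C)) = c_cmp C (snd S 2) (\<phi> 2)"
    using is_smorD(4)[OF \<phi>(2), of 2] n_ge_3 triv by (simp add: numeral_eq_Suc)
  moreover have "\<phi> 3 \<in> hom C (c_zobj C) (fst S 3)"
    using is_smorD(3)[OF \<phi>(2), of 3] n_ge_3 triv by simp
  ultimately show ?thesis using \<phi>(1) X X_def by (simp add: hom_def)
qed

text \<open>(N3) extends \<open>(1, 0)\<close> to a morphism into the rotated trivial angle
  \<open>X \<rightarrow> 0 \<rightarrow> \<dots> \<rightarrow> 0 \<rightarrow> \<Sigma>X \<rightarrow> \<Sigma>X\<close>; then \<open>\<alpha>\<^sub>n\<close> is \<open>\<plusminus>\<phi>\<^sub>n\<close>, and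
  \<open>\<phi>\<^sub>n \<alpha>\<^sub>n\<^sub>-\<^sub>1\<close> factors through 0.\<close>

lemma angle_cmp_last_zer:
  assumes S: "S \<in> N"
  shows "c_cmp C (snd S n) (snd S (n - 1)) = c_zer C (fst S (n - 1)) (c_shO C (fst S 1))"
proof -
  have seq: "is_seq C n S" using angle_is_seq[OF S] .
  have n: "3 \<le> n" "Suc (n - 1) = n" using n_ge_3 by auto
  define X where "X = fst S 1"
  have X: "X \<in> c_ob C" using is_seqD(1)[OF seq, of 1] n X_def by simp
  define R where "R = rot C n (triv_seq C n X)"
  have R: "R \<in> N"
    using rot_angle_iff triv_seq_angle[OF X] angle_is_seq R_def by blast
  have rot: "fst R 1 = X" "fst R 2 = c_zobj C" "snd R 1 = c_zer C X (c_zobj C)"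
    "fst R (n - 1) = c_zobj C" "snd R (n - 1) = c_zer C (c_zobj C) (c_shO C X)"
    "fst R n = c_shO C X" "snd R n = sgnm C n (c_id C (c_shO C X))"
    using n X by (auto simp: R_def rot_def triv_seq_def Let_def)
  have s1: "snd S 1 \<in> hom C X (fst S 2)"
    using is_seqD(2)[OF seq, of 1] n X_def by (simp add: numeral_2_eq_2)
  have S2: "fst S 2 \<in> c_ob C" using is_seqD(1)[OF seq, of 2] n by simp
  obtain \<phi> where \<phi>: "\<phi> 1 = c_id C X" "is_smor C n S R \<phi>"
    using angle_morphism_exists[OF S R, of "c_id C X" "c_zer C (fst S 2) (c_zobj C)"]
      rot s1 S2 X X_def by (auto simp: hom_def)
  have "\<phi> (n - 1) \<in> hom C (fst S (n - 1)) (c_zobj C)"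
    using is_smorD(3)[OF \<phi>(2), of "n - 1"] n rot by simp
  moreover have "c_cmp C (\<phi> n) (snd S (n - 1)) = c_cmp C (snd R (n - 1)) (\<phi> (n - 1))"
    using is_smorD(4)[OF \<phi>(2), of "n - 1"] n by simp
  ultimately have zero: "c_cmp C (\<phi> n) (snd S (n - 1)) = c_zer C (fst S (n - 1)) (c_shO C X)"
    using rot X by (simp add: hom_def)
  have \<phi>n: "\<phi> n \<in> hom C (fst S n) (c_shO C X)"
    using is_smorD(3)[OF \<phi>(2), of n] n rot by simp
  have "snd S n \<in> hom C (fst S n) (c_shO C X)"
    using is_seqD(3)[OF seq] X_def by simp
  then have "snd S n = c_cmp C (snd R n) (\<phi> n)"
    using is_smorD(5)[OF \<phi>(2)] \<phi>(1) X by (simp add: hom_def)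
  moreover have "snd S (n - 1) \<in> hom C (fst S (n - 1)) (fst S n)"
    using is_seqD(2)[OF seq, of "n - 1"] n by simp
  ultimately show ?thesis
    using zero \<phi>n rot X X_def is_seqD(1)[OF seq, of "n - 1"] n by (simp add: hom_def sgnm_def)
qed

end

section \<open>The sequence as a direct summand of the mapping cone\<close>

locale cone_from_id = n_angulated_cat C n N for C :: "('o,'m) acat" and n N +
  fixes A B :: "nat \<Rightarrow> 'o" and \<alpha> \<beta> \<phi> :: "nat \<Rightarrow> 'm"
  assumes angle_A: "(A, \<alpha>) \<in> N"
    and angle_B: "(B, \<beta>) \<in> N"
    and B_1: "B 1 = A 1"
    and phi_1: "\<phi> 1 = c_id C (A 1)"
    and smor_phi: "is_smor C n (A, \<alpha>) (B, \<beta>) \<phi>"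
    and cone_angle: "cone C n (A, \<alpha>) (B, \<beta>) \<phi> \<in> N"
begin

abbreviation "Lseq \<equiv> lem_seq C n A \<alpha> B \<beta> \<phi>"
abbreviation "Cone \<equiv> cone C n (A, \<alpha>) (B, \<beta>) \<phi>"

text \<open>Stated with \<open>Suc 0\<close>, since the simplifier rewrites \<open>1\<close> to \<open>Suc 0\<close> first.\<close>

lemma n_arith[simp]:
  "Suc (n - Suc 0) = n" "n - Suc 0 < n" "\<not> n < n - Suc 0"
  "n - Suc 0 \<noteq> n" "n \<noteq> n - Suc 0" "n - Suc 0 \<noteq> Suc 0" "n \<noteq> Suc 0"
  "even (n - Suc 0) \<longleftrightarrow> odd n"
  using n_ge_3 by auto

lemma B_Suc_0[simp]: "B (Suc 0) = A (Suc 0)" using B_1 by simp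
declare B_1[simp]

lemma seq_A: "is_seq C n (A, \<alpha>)" using is_smorD(1)[OF smor_phi] .
lemma seq_B: "is_seq C n (B, \<beta>)" using is_smorD(2)[OF smor_phi] .

lemma ob_A[simp]: "1 \<le> i \<Longrightarrow> i \<le> n \<Longrightarrow> A i \<in> c_ob C" using is_seqD(1)[OF seq_A] by simp
lemma ob_B[simp]: "1 \<le> i \<Longrightarrow> i \<le> n \<Longrightarrow> B i \<in> c_ob C" using is_seqD(1)[OF seq_B] by simp
lemma ob_A_1[simp]: "A 1 \<in> c_ob C" "A (Suc 0) \<in> c_ob C" using n_ge_3 by simp_all
lemma ob_n[simp]: "A n \<in> c_ob C" "B n \<in> c_ob C" using n_ge_3 by simp_all

lemma alpha_mor[simp]: "1 \<le> i \<Longrightarrow> i < n \<Longrightarrow> \<alpha> i \<in> c_mor C"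
  and dom_alpha[simp]: "1 \<le> i \<Longrightarrow> i < n \<Longrightarrow> c_dom C (\<alpha> i) = A i"
  and cod_alpha[simp]: "1 \<le> i \<Longrightarrow> i < n \<Longrightarrow> c_cod C (\<alpha> i) = A (Suc i)"
  using is_seqD(2)[OF seq_A] by (auto simp: hom_def)

lemma beta_mor[simp]: "1 \<le> i \<Longrightarrow> i < n \<Longrightarrow> \<beta> i \<in> c_mor C"
  and dom_beta[simp]: "1 \<le> i \<Longrightarrow> i < n \<Longrightarrow> c_dom C (\<beta> i) = B i"
  and cod_beta[simp]: "1 \<le> i \<Longrightarrow> i < n \<Longrightarrow> c_cod C (\<beta> i) = B (Suc i)"
  using is_seqD(2)[OF seq_B] by (auto simp: hom_def)

lemma phi_mor[simp]: "1 \<le> i \<Longrightarrow> i \<le> n \<Longrightarrow> \<phi> i \<in> c_mor C"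
  and dom_phi[simp]: "1 \<le> i \<Longrightarrow> i \<le> n \<Longrightarrow> c_dom C (\<phi> i) = A i"
  and cod_phi[simp]: "1 \<le> i \<Longrightarrow> i \<le> n \<Longrightarrow> c_cod C (\<phi> i) = B i"
  using is_smorD(3)[OF smor_phi] by (auto simp: hom_def)

lemma alpha_n_mor[simp]: "\<alpha> n \<in> c_mor C"
  and dom_alpha_n[simp]: "c_dom C (\<alpha> n) = A n"
  and cod_alpha_n[simp]: "c_cod C (\<alpha> n) = c_shO C (A 1)"
  using is_seqD(3)[OF seq_A] by (auto simp: hom_def)

lemma beta_n_mor[simp]: "\<beta> n \<in> c_mor C"
  and dom_beta_n[simp]: "c_dom C (\<beta> n) = B n"
  and cod_beta_n[simp]: "c_cod C (\<beta> n) = c_shO C (A 1)"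
  using is_seqD(3)[OF seq_B] by (auto simp: hom_def)

lemma phi_square: "1 \<le> i \<Longrightarrow> i < n \<Longrightarrow> c_cmp C (\<phi> (Suc i)) (\<alpha> i) = c_cmp C (\<beta> i) (\<phi> i)"
  using is_smorD(4)[OF smor_phi] by simp

lemma phi_2_alpha_1: "c_cmp C (\<phi> 2) (\<alpha> 1) = \<beta> 1"
  using phi_square[of 1] phi_1 n_ge_3 by (simp add: numeral_2_eq_2)

lemma beta_n_phi_n[simp]: "c_cmp C (\<beta> n) (\<phi> n) = \<alpha> n"
  using is_smorD(5)[OF smor_phi] phi_1 n_ge_3 by simp

lemma alpha_2_alpha_1[simp]: "c_cmp C (\<alpha> 2) (\<alpha> 1) = c_zer C (A 1) (A 3)"
  using angle_cmp_first_zer[OF angle_A] by simp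

lemma beta_n_beta_pred[simp]:
  "c_cmp C (\<beta> n) (\<beta> (n - 1)) = c_zer C (B (n - 1)) (c_shO C (A 1))"
  "c_cmp C (\<beta> n) (\<beta> (n - Suc 0)) = c_zer C (B (n - Suc 0)) (c_shO C (A (Suc 0)))"
  using angle_cmp_last_zer[OF angle_B] by simp_all

lemma Lseq_obj_first: "fst Lseq 1 = A 2"
  by (simp add: lem_seq_def)
lemma Lseq_obj_mid: "1 < k \<Longrightarrow> k < n \<Longrightarrow> fst Lseq k = c_dsum C (A (Suc k)) (B k)"
  by (simp add: lem_seq_def)
lemma Lseq_obj_last: "fst Lseq n = B n"
  using n_ge_3 by (simp add: lem_seq_def)

lemma Lseq_map_first:
  "snd Lseq 1 = col (c_in1 C (A 3) (B 2)) (c_in2 C (A 3) (B 2)) (c_neg C (\<alpha> 2)) (\<phi> 2)"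
  by (simp add: lem_seq_def col_def del: cmp_neg_right cmp_neg_left)
lemma Lseq_map_mid: "1 < j \<Longrightarrow> j < n - 1 \<Longrightarrow> snd Lseq j =
   mat C (c_pr1 C (A (Suc j)) (B j)) (c_pr2 C (A (Suc j)) (B j))
     (c_in1 C (A (Suc (Suc j))) (B (Suc j))) (c_in2 C (A (Suc (Suc j))) (B (Suc j)))
     (\<alpha> (Suc j)) (c_zer C (B j) (A (Suc (Suc j)))) (sgnm C j (\<phi> (Suc j))) (\<beta> j)"
  by (simp add: lem_seq_def matD_def)
lemma Lseq_map_penult: "snd Lseq (n - 1) =
   row (c_pr1 C (A n) (B (n - 1))) (c_pr2 C (A n) (B (n - 1))) (sgnm C (Suc n) (\<phi> n)) (\<beta> (n - 1))"
  using n_ge_3 by (simp add: lem_seq_def row_def)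
lemma Lseq_map_last: "snd Lseq n = c_cmp C (c_shM C (\<alpha> 1)) (\<beta> n)"
  using n_ge_3 by (simp add: lem_seq_def)

lemma Cone_obj: "1 \<le> i \<Longrightarrow> i < n \<Longrightarrow> fst Cone i = c_dsum C (A (Suc i)) (B i)"
  by (simp add: cone_def Let_def)
lemma Cone_obj_last: "fst Cone n = c_dsum C (c_shO C (A 1)) (B n)"
  by (simp add: cone_def Let_def)

lemma Cone_map_mid:
  assumes "1 \<le> i" "i < n - 1"
  shows "snd Cone i =
   mat C (c_pr1 C (A (Suc i)) (B i)) (c_pr2 C (A (Suc i)) (B i))
     (c_in1 C (A (Suc (Suc i))) (B (Suc i))) (c_in2 C (A (Suc (Suc i))) (B (Suc i)))
     (c_neg C (\<alpha> (Suc i))) (c_zer C (B i) (A (Suc (Suc i)))) (\<phi> (Suc i)) (\<beta> i)"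
proof -
  have "i < n" "Suc i < n" using assms by arith+
  then show ?thesis by (simp add: cone_def Let_def matD_def)
qed
lemma Cone_map_penult: "snd Cone (n - 1) =
   mat C (c_pr1 C (A n) (B (n - 1))) (c_pr2 C (A n) (B (n - 1)))
     (c_in1 C (c_shO C (A 1)) (B n)) (c_in2 C (c_shO C (A 1)) (B n))
     (c_neg C (\<alpha> n)) (c_zer C (B (n - 1)) (c_shO C (A 1))) (\<phi> n) (\<beta> (n - 1))"
  using n_ge_3 by (simp add: cone_def Let_def matD_def)
lemma Cone_map_last: "snd Cone n =
   mat C (c_pr1 C (c_shO C (A 1)) (B n)) (c_pr2 C (c_shO C (A 1)) (B n))
     (c_shM C (c_in1 C (A 2) (A 1))) (c_shM C (c_in2 C (A 2) (A 1)))
     (c_neg C (c_shM C (\<alpha> 1))) (c_zer C (B n) (c_shO C (A 2))) (c_id C (c_shO C (A 1))) (\<beta> n)"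
  using n_ge_3 phi_1 by (simp add: cone_def Let_def)

definition sign_diag :: "nat \<Rightarrow> 'm" where
  "sign_diag i = mat C (c_pr1 C (A (Suc i)) (B i)) (c_pr2 C (A (Suc i)) (B i))
     (c_in1 C (A (Suc i)) (B i)) (c_in2 C (A (Suc i)) (B i))
     (sgnm C i (c_id C (A (Suc i)))) (c_zer C (B i) (A (Suc i))) (c_zer C (A (Suc i)) (B i)) (c_id C (B i))"

definition to_cone :: "nat \<Rightarrow> 'm" where
  "to_cone i =
    (if i = 1 then col (c_in1 C (A 2) (A 1)) (c_in2 C (A 2) (A 1)) (c_id C (A 2)) (c_zer C (A 2) (A 1))
     else if i < n then sign_diag i
     else col (c_in1 C (c_shO C (A 1)) (B n)) (c_in2 C (c_shO C (A 1)) (B n)) (c_neg C (\<beta> n)) (c_id C (B n)))"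

definition from_cone :: "nat \<Rightarrow> 'm" where
  "from_cone i =
    (if i = 1 then row (c_pr1 C (A 2) (A 1)) (c_pr2 C (A 2) (A 1)) (c_id C (A 2)) (\<alpha> 1)
     else if i < n then sign_diag i
     else row (c_pr1 C (c_shO C (A 1)) (B n)) (c_pr2 C (c_shO C (A 1)) (B n))
       (c_zer C (c_shO C (A 1)) (B n)) (c_id C (B n)))"

lemma to_cone_first: "to_cone 1 =
    col (c_in1 C (A 2) (A 1)) (c_in2 C (A 2) (A 1)) (c_id C (A 2)) (c_zer C (A 2) (A 1))"
  and to_cone_mid: "1 < i \<Longrightarrow> i < n \<Longrightarrow> to_cone i = sign_diag i"
  and to_cone_last: "to_cone n =
    col (c_in1 C (c_shO C (A 1)) (B n)) (c_in2 C (c_shO C (A 1)) (B n)) (c_neg C (\<beta> n)) (c_id C (B n))"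
  by (simp_all add: to_cone_def)

lemma from_cone_first: "from_cone 1 =
    row (c_pr1 C (A 2) (A 1)) (c_pr2 C (A 2) (A 1)) (c_id C (A 2)) (\<alpha> 1)"
  and from_cone_mid: "1 < i \<Longrightarrow> i < n \<Longrightarrow> from_cone i = sign_diag i"
  and from_cone_last: "from_cone n = row (c_pr1 C (c_shO C (A 1)) (B n)) (c_pr2 C (c_shO C (A 1)) (B n))
    (c_zer C (c_shO C (A 1)) (B n)) (c_id C (B n))"
  by (simp_all add: from_cone_def)

lemmas block_cmp = mat_cmp_mat mat_cmp_col row_cmp_mat col_cmp_row row_cmp_col sh_col sh_row

lemma Cone_map_first: "snd Cone 1 = mat C (c_pr1 C (A 2) (B 1)) (c_pr2 C (A 2) (B 1))
     (c_in1 C (A 3) (B 2)) (c_in2 C (A 3) (B 2))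
     (c_neg C (\<alpha> 2)) (c_zer C (B 1) (A 3)) (\<phi> 2) (\<beta> 1)"
  using Cone_map_mid[of 1] n_ge_3 by (simp del: One_nat_def B_1)

lemma to_cone_square_first: "c_cmp C (to_cone 2) (snd Lseq 1) = c_cmp C (snd Cone 1) (to_cone 1)"
proof -
  have "to_cone 2 = sign_diag 2" using to_cone_mid[of 2] n_ge_3 by simp
  then show ?thesis using n_ge_3
    unfolding Cone_map_first to_cone_first Lseq_map_first sign_diag_def
    by (simp add: block_cmp sgnm_def del: One_nat_def)
qed

lemma to_cone_square_mid:
  assumes "1 < i" "i < n - 1"
  shows "c_cmp C (to_cone (Suc i)) (snd Lseq i) = c_cmp C (snd Cone i) (to_cone i)"
proof -
  have "1 \<le> i" "i < n" "Suc i < n" "Suc (Suc i) \<le> n" "i \<noteq> 1" using assms by arith+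
  then show ?thesis using assms
    by (simp add: to_cone_mid Lseq_map_mid Cone_map_mid sign_diag_def block_cmp sgnm_def)
qed

lemma to_cone_square_penult:
  "c_cmp C (to_cone n) (snd Lseq (n - 1)) = c_cmp C (snd Cone (n - 1)) (to_cone (n - 1))"
proof -
  have "to_cone (n - 1) = sign_diag (n - 1)" using n_ge_3 by (intro to_cone_mid) auto
  then show ?thesis using n_ge_3
    unfolding to_cone_last Lseq_map_penult Cone_map_penult sign_diag_def
    by (simp add: block_cmp sgnm_def)
qed

lemma to_cone_square_last:
  "c_cmp C (c_shM C (to_cone 1)) (snd Lseq n) = c_cmp C (snd Cone n) (to_cone n)"
  unfolding to_cone_first to_cone_last Lseq_map_last Cone_map_last using n_ge_3
  by (simp add: block_cmp col_cmp del: One_nat_def)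

lemma from_cone_square_first: "c_cmp C (from_cone 2) (snd Cone 1) = c_cmp C (snd Lseq 1) (from_cone 1)"
proof -
  have "from_cone 2 = sign_diag 2" using from_cone_mid[of 2] n_ge_3 by simp
  then show ?thesis using n_ge_3 phi_2_alpha_1
    unfolding Cone_map_first from_cone_first Lseq_map_first sign_diag_def
    by (simp add: block_cmp sgnm_def del: One_nat_def)
qed

lemma from_cone_square_mid:
  assumes "1 < i" "i < n - 1"
  shows "c_cmp C (from_cone (Suc i)) (snd Cone i) = c_cmp C (snd Lseq i) (from_cone i)"
proof -
  have "1 \<le> i" "i < n" "Suc i < n" "Suc (Suc i) \<le> n" "i \<noteq> 1" using assms by arith+
  then show ?thesis using assms
    by (simp add: from_cone_mid Lseq_map_mid Cone_map_mid sign_diag_def block_cmp sgnm_def)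
qed

lemma from_cone_square_penult:
  "c_cmp C (from_cone n) (snd Cone (n - 1)) = c_cmp C (snd Lseq (n - 1)) (from_cone (n - 1))"
proof -
  have "from_cone (n - 1) = sign_diag (n - 1)" using n_ge_3 by (intro from_cone_mid) auto
  then show ?thesis using n_ge_3
    unfolding from_cone_last Lseq_map_penult Cone_map_penult sign_diag_def
    by (simp add: block_cmp sgnm_def)
qed

lemma from_cone_square_last:
  "c_cmp C (c_shM C (from_cone 1)) (snd Cone n) = c_cmp C (snd Lseq n) (from_cone n)"
  unfolding from_cone_first from_cone_last Lseq_map_last Cone_map_last using n_ge_3
  by (simp add: block_cmp cmp_row del: One_nat_def)

lemma index_cases:
  assumes "1 \<le> i" "i \<le> n"
  obtains (first) "i = 1" | (mid) "1 < i" "i < n" | (last) "i = n"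
  using assms by linarith

lemma to_cone_hom:
  assumes "1 \<le> i" "i \<le> n"
  shows "to_cone i \<in> hom C (fst Lseq i) (fst Cone i)"
  using assms
proof (cases rule: index_cases)
  case first
  then show ?thesis using Cone_obj[of 1] n_ge_3 unfolding hom_def
    by (simp add: to_cone_first Lseq_obj_first del: One_nat_def)
next
  case mid
  then show ?thesis using Cone_obj[of i] Lseq_obj_mid[of i] unfolding hom_def
    by (simp add: to_cone_mid sign_diag_def sgnm_def)
next
  case last
  then show ?thesis unfolding hom_def by (simp add: to_cone_last Lseq_obj_last Cone_obj_last)
qed

lemma from_cone_hom:
  assumes "1 \<le> i" "i \<le> n"
  shows "from_cone i \<in> hom C (fst Cone i) (fst Lseq i)"
  using assms
proof (cases rule: index_cases)
  case first
  then show ?thesis using Cone_obj[of 1] n_ge_3 unfolding hom_def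
    by (simp add: from_cone_first Lseq_obj_first del: One_nat_def)
next
  case mid
  then show ?thesis using Cone_obj[of i] Lseq_obj_mid[of i] unfolding hom_def
    by (simp add: from_cone_mid sign_diag_def sgnm_def)
next
  case last
  then show ?thesis unfolding hom_def by (simp add: from_cone_last Lseq_obj_last Cone_obj_last)
qed

lemma from_cone_to_cone:
  assumes "1 \<le> i" "i \<le> n"
  shows "c_cmp C (from_cone i) (to_cone i) = c_id C (fst Lseq i)"
  using assms
proof (cases rule: index_cases)
  case first
  then show ?thesis using n_ge_3
    by (simp add: from_cone_first to_cone_first Lseq_obj_first block_cmp del: One_nat_def)
next
  case mid
  then show ?thesis using Lseq_obj_mid[of i]
    by (simp add: from_cone_mid to_cone_mid sign_diag_def sgnm_def block_cmp)
next
  case last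
  then show ?thesis by (simp add: from_cone_last to_cone_last Lseq_obj_last block_cmp)
qed

lemma map_index_cases:
  assumes "1 \<le> i" "i < n"
  obtains (first) "i = 1" | (mid) "1 < i" "i < n - 1" | (penult) "1 < i" "i = n - 1"
  using assms n_ge_3 by linarith

lemma is_seq_Lseq: "is_seq C n Lseq"
  unfolding is_seq_def
proof (intro conjI ballI)
  fix i assume "i \<in> {1..n}"
  then have "1 \<le> i" "i \<le> n" by auto
  then show "fst Lseq i \<in> c_ob C"
  proof (cases rule: index_cases)
    case first
    then show ?thesis using n_ge_3 by (simp add: Lseq_obj_first del: One_nat_def)
  qed (simp_all add: Lseq_obj_mid Lseq_obj_last)
next
  fix i assume "i \<in> {1..<n}"
  then have "1 \<le> i" "i < n" by auto
  then show "snd Lseq i \<in> hom C (fst Lseq i) (fst Lseq (Suc i))"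
  proof (cases rule: map_index_cases)
    case first
    have "fst Lseq (Suc 1) = c_dsum C (A 3) (B 2)"
      using Lseq_obj_mid[of 2] n_ge_3 by (simp add: numeral_2_eq_2 numeral_3_eq_3)
    then show ?thesis
      unfolding first hom_def Lseq_map_first Lseq_obj_first using n_ge_3 by (simp del: One_nat_def)
  next
    case mid
    then show ?thesis using Lseq_obj_mid[of i] Lseq_obj_mid[of "Suc i"] unfolding hom_def
      by (simp add: Lseq_map_mid sgnm_def)
  next
    case penult
    then show ?thesis using Lseq_obj_mid[of "n - 1"] unfolding penult(2) hom_def Lseq_map_penult
      by (simp add: Lseq_obj_last sgnm_def)
  qed
next
  show "snd Lseq n \<in> hom C (fst Lseq n) (c_shO C (fst Lseq 1))"
    unfolding hom_def Lseq_map_last Lseq_obj_last Lseq_obj_first using n_ge_3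
    by (simp del: One_nat_def)
qed

lemma is_smor_to_cone: "is_smor C n Lseq Cone to_cone"
  unfolding is_smor_def
proof (intro conjI ballI is_seq_Lseq angle_is_seq[OF cone_angle])
  fix i assume "i \<in> {1..n}"
  then show "to_cone i \<in> hom C (fst Lseq i) (fst Cone i)" using to_cone_hom by simp
next
  fix i assume "i \<in> {1..<n}"
  then have "1 \<le> i" "i < n" by auto
  then show "c_cmp C (to_cone (Suc i)) (snd Lseq i) = c_cmp C (snd Cone i) (to_cone i)"
  proof (cases rule: map_index_cases)
    case first
    then show ?thesis using to_cone_square_first by (simp add: numeral_2_eq_2 del: One_nat_def)
  next
    case mid
    then show ?thesis by (rule to_cone_square_mid)
  next
    case penult
    then show ?thesis using to_cone_square_penult by simp
  qed
qed (rule to_cone_square_last)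

lemma is_smor_from_cone: "is_smor C n Cone Lseq from_cone"
  unfolding is_smor_def
proof (intro conjI ballI is_seq_Lseq angle_is_seq[OF cone_angle])
  fix i assume "i \<in> {1..n}"
  then show "from_cone i \<in> hom C (fst Cone i) (fst Lseq i)" using from_cone_hom by simp
next
  fix i assume "i \<in> {1..<n}"
  then have "1 \<le> i" "i < n" by auto
  then show "c_cmp C (from_cone (Suc i)) (snd Cone i) = c_cmp C (snd Lseq i) (from_cone i)"
  proof (cases rule: map_index_cases)
    case first
    then show ?thesis using from_cone_square_first by (simp add: numeral_2_eq_2 del: One_nat_def)
  next
    case mid
    then show ?thesis by (rule from_cone_square_mid)
  next
    case penult
    then show ?thesis using from_cone_square_penult by simp
  qed
qed (rule from_cone_square_last)

lemma Lseq_summand_Cone: "is_summand C n Lseq Cone"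
  unfolding is_summand_def
proof (intro exI conjI ballI)
  show "is_smor C n Lseq Cone to_cone" by (rule is_smor_to_cone)
  show "is_smor C n Cone Lseq from_cone" by (rule is_smor_from_cone)
  fix i assume "i \<in> {1..n}"
  then show "c_cmp C (from_cone i) (to_cone i) = c_id C (fst Lseq i)"
    using from_cone_to_cone by simp
qed

lemma Lseq_angle: "Lseq \<in> N"
  using summand_angle[OF cone_angle is_seq_Lseq Lseq_summand_Cone] .

end

theorem lemma4p1:
  fixes C :: "('o,'m) acat" and n :: nat and N :: "('o,'m) nseq set"
    and A B :: "nat \<Rightarrow> 'o" and \<alpha> \<beta> \<phi> :: "nat \<Rightarrow> 'm"
  assumes "n \<ge> 3"
    and "n_angulated C n N"
    and "(A, \<alpha>) \<in> N"
    and "(B, \<beta>) \<in> N"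
    and "B 1 = A 1"
    and "\<phi> 2 \<in> hom C (A 2) (B 2)"
    and "c_cmp C (\<phi> 2) (\<alpha> 1) = \<beta> 1"
    and "\<phi> 1 = c_id C (A 1)"
    and "is_smor C n (A, \<alpha>) (B, \<beta>) \<phi>"
    and "cone C n (A, \<alpha>) (B, \<beta>) \<phi> \<in> N"
  shows "lem_seq C n A \<alpha> B \<beta> \<phi> \<in> N"
proof -
  interpret cone_from_id C n N A B \<alpha> \<beta> \<phi>
    using assms(2-5,8-10) by unfold_locales
  show ?thesis by (rule Lseq_angle)
qed

end
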